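(* Let $(G_n)_{n \geq 1}$ be a sequence of finite solvable groups of bounded derived length with $|G_n| \to \infty$. Then $(G_n)_{n \geq 1}$ does not have property BAb; that is, there is no function $f$ with $ab_k(G_n) \leq f(k)$ for all $k$ and all $n$. In particular $(G_n)_{n \geq 1}$ is not an expanding sequence of groups.
   Context: For a group $G$, $G' = [G,G]$ and $ab_k(G) = \sup\{ |H : H'| : H \leqslant G, \ |G:H| \leq k\}$. A sequence of groups $(G_n)$ has property BAb (bounded abelianizations) if there is a function $f$ of $k$ alone with $ab_k(G_n) \leq f(k)$ for all $k, n$. For a finite group $G$ and symmetric generating set $S$, the Cayley graph $\mathrm{Cay}(G,S)$ has vertex set $G$ and edges $(g, gs)$ for $g \in G$, $s \in S$. For a finite graph $\Gamma$, $h_{ver}(\Gamma) = \min_{X \neq \emptyset, |X| \leq |V(\Gamma)|/2} |\partial_{ver}X|/|X|$, where $\partial_{ver}X$ is the set of vertices at distance exactly $1$ from $X$; a sequence of regular bounded-degree graphs with vertex counts tending to infinity is expander if $h_{ver} \geq \varepsilon$ for a fixed $\varepsilon>0$. A sequence of finite groups $(G_n)$ with $|G_n| \to \infty$ is an expanding sequence if there are symmetric generating sets $S_n$ of bounded cardinality with $(\mathrm{Cay}(G_n, S_n))$ expander graphs. *)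

theory Defs
  imports "HOL-Algebra.Algebra"
begin

definition group_index :: "('a, 'b) monoid_scheme \<Rightarrow> 'a set \<Rightarrow> nat" where
  "group_index G H = card (rcosets\<^bsub>G\<^esub> H)"

definition ab_k :: "nat \<Rightarrow> ('a, 'b) monoid_scheme \<Rightarrow> nat" where
  "ab_k k G = Sup {group_index (G\<lparr>carrier := H\<rparr>) (derived G H) | H.
                     subgroup H G \<and> group_index G H \<le> k}"

definition has_BAb :: "(nat \<Rightarrow> ('a, 'b) monoid_scheme) \<Rightarrow> bool" where
  "has_BAb G \<longleftrightarrow> (\<exists>f :: nat \<Rightarrow> nat. \<forall>k n. ab_k k (G n) \<le> f k)"

definition symmetric_generating_set :: "('a, 'b) monoid_scheme \<Rightarrow> 'a set \<Rightarrow> bool" where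
  "symmetric_generating_set G S \<longleftrightarrow>
     S \<subseteq> carrier G \<and> (\<forall>s\<in>S. inv\<^bsub>G\<^esub> s \<in> S) \<and> generate G S = carrier G"

definition cay_vboundary :: "('a, 'b) monoid_scheme \<Rightarrow> 'a set \<Rightarrow> 'a set \<Rightarrow> 'a set" where
  "cay_vboundary G S A =
     {y \<in> carrier G. y \<notin> A \<and> (\<exists>x\<in>A. \<exists>s\<in>S. y = x \<otimes>\<^bsub>G\<^esub> s)}"

definition cay_hver_ge :: "('a, 'b) monoid_scheme \<Rightarrow> 'a set \<Rightarrow> real \<Rightarrow> bool" where
  "cay_hver_ge G S \<epsilon> \<longleftrightarrow>
     (\<forall>A. A \<subseteq> carrier G \<and> A \<noteq> {} \<and> real (card A) \<le> real (card (carrier G)) / 2 \<longrightarrow>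
          real (card (cay_vboundary G S A)) / real (card A) \<ge> \<epsilon>)"

definition expanding_sequence :: "(nat \<Rightarrow> ('a, 'b) monoid_scheme) \<Rightarrow> bool" where
  "expanding_sequence G \<longleftrightarrow>
     filterlim (\<lambda>n. card (carrier (G n))) at_top sequentially \<and>
     (\<exists>S :: nat \<Rightarrow> 'a set. \<exists>c :: nat. \<exists>\<epsilon> :: real. \<epsilon> > 0 \<and>
        (\<forall>n. symmetric_generating_set (G n) (S n) \<and> card (S n) \<le> c \<and>
             cay_hver_ge (G n) (S n) \<epsilon>))"

end

theory Submission
  imports Defs "HOL-Real_Asymp.Real_Asymp"
begin

(* If the groups had BAb with bound f, then |G : G'| \<le> f 1, and inductively each term of the
   derived series has index at most M(i+1) = M(i) * f (M(i)) in G, because ab_k is monotone in k.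
   Bounded derived length then bounds |G_n|, contradicting |G_n| \<rightarrow> \<infinity>.

   Expanding sequences, on the other hand, have BAb. For H of index at most k in G, every word of
   length r in S is a word of length r in the at most k |S| Schreier generators of H times a coset
   representative. In the abelian group H/H' such a word only depends on the multiplicities of its
   letters, so the ball of radius r meets at most k (r + 1)^(k |S|) cosets of H'. Vertex expansion
   makes the union of these cosets grow exponentially in r as long as it fills at most half of G,
   which bounds |H : H'| in terms of k, |S| and the expansion constant. *)

section \<open>Indices along the derived series\<close>

lemma (in group) group_index_mult_card:
  assumes "subgroup H G"
  shows "group_index G H * card H = card (carrier G)"
  using lagrange[OF assms] unfolding group_index_def order_def .

lemma (in group) group_index_self: "finite (carrier G) \<Longrightarrow> group_index G (carrier G) = 1"
  using group_index_mult_card[OF subgroup_self] finite_subset[of "{\<one>}" "carrier G"]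
  by (metis card_0_eq empty_iff insert_subset one_closed mult_eq_self_implies_10 mult.commute)

lemma (in group) group_index_trivial: "group_index G {\<one>} = card (carrier G)"
  using group_index_mult_card[OF triv_subgroup] by simp

lemma (in group) group_index_trans:
  assumes fin: "finite (carrier G)" and H: "subgroup H G" and K: "subgroup K G" and KH: "K \<subseteq> H"
  shows "group_index G K = group_index G H * group_index (G\<lparr>carrier := H\<rparr>) K"
proof -
  have "card K > 0"
    using finite_subset[OF subgroup.subset[OF K] fin] subgroup.one_closed[OF K] card_gt_0_iff
    by blast
  moreover have "group_index (G\<lparr>carrier := H\<rparr>) K * card K = card H"
    using group.group_index_mult_card[OF subgroup_imp_group[OF H] subgroup_incl[OF K H KH]] by simp
  ultimately show ?thesis
    using group_index_mult_card[OF H] group_index_mult_card[OF K]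
    by (metis mult.assoc mult_right_cancel not_gr0)
qed

lemma index_derived_le_ab_k:
  assumes "group G" "finite (carrier G)" "subgroup H G" "group_index G H \<le> k"
  shows "group_index (G\<lparr>carrier := H\<rparr>) (derived G H) \<le> ab_k k G"
proof -
  have "{group_index (G\<lparr>carrier := H\<rparr>) (derived G H) | H. subgroup H G \<and> group_index G H \<le> k}
          \<subseteq> (\<lambda>H. group_index (G\<lparr>carrier := H\<rparr>) (derived G H)) ` Pow (carrier G)"
    using subgroup.subset by blast
  then show ?thesis
    unfolding ab_k_def using assms by (intro le_cSup_finite) (auto intro: finite_surj)
qed

lemma ab_k_le:
  assumes "\<And>H. subgroup H G \<Longrightarrow> group_index G H \<le> k \<Longrightarrow>
             group_index (G\<lparr>carrier := H\<rparr>) (derived G H) \<le> b"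
  shows "ab_k k G \<le> b"
proof (cases "{group_index (G\<lparr>carrier := H\<rparr>) (derived G H) | H.
                 subgroup H G \<and> group_index G H \<le> k} = {}")
  case False
  then show ?thesis unfolding ab_k_def using assms by (intro cSup_least) auto
qed (simp only: ab_k_def, simp add: Sup_nat_def)

lemma ab_k_mono:
  assumes "group G" "finite (carrier G)" "k \<le> k'"
  shows "ab_k k G \<le> ab_k k' G"
  using assms by (intro ab_k_le index_derived_le_ab_k) auto

lemma (in group) index_derived_series_le:
  assumes fin: "finite (carrier G)" and ab: "\<And>k. ab_k k G \<le> f k"
  shows "group_index G ((derived G ^^ i) (carrier G)) \<le> ((\<lambda>m. m * f m) ^^ i) 1"
proof (induction i)
  case 0
  show ?case using group_index_self[OF fin] by simp
next
  case (Suc i)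
  define D where "D = (derived G ^^ i) (carrier G)"
  define M where "M = ((\<lambda>m. m * f m) ^^ i) 1"
  have D: "subgroup D G" unfolding D_def by (rule exp_of_derived_is_subgroup[OF subgroup_self])
  have "group_index G (derived G D)
          = group_index G D * group_index (G\<lparr>carrier := D\<rparr>) (derived G D)"
    using group_index_trans[OF fin D derived_is_subgroup derived_incl[OF _ D]] subgroup.subset[OF D]
    by simp
  also have "\<dots> \<le> M * ab_k M G"
    using Suc.IH index_derived_le_ab_k[OF is_group fin D] ab_k_mono[OF is_group fin]
    unfolding D_def M_def by (meson le_trans mult_le_mono order_refl)
  also have "\<dots> \<le> M * f M" using ab by simp
  finally show ?case unfolding D_def M_def by simp
qed

lemma (in group) card_le_of_derived_length:
  assumes "finite (carrier G)" "\<And>k. ab_k k G \<le> f k" "(derived G ^^ d) (carrier G) = {\<one>}"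
  shows "card (carrier G) \<le> ((\<lambda>m. m * f m) ^^ d) 1"
  using index_derived_series_le[OF assms(1,2), of d] assms(3) group_index_trivial by simp

section \<open>Schreier generators modulo the derived subgroup\<close>

lemma (in monoid) foldr_mult_snoc:
  assumes "set xs \<subseteq> carrier G" "a \<in> carrier G"
  shows "foldr (\<otimes>) (xs @ [a]) \<one> = foldr (\<otimes>) xs \<one> \<otimes> a"
  using assms by (induction xs) (auto simp: m_assoc)

lemma (in normal) rcos_foldr:
  "set xs \<subseteq> carrier G \<Longrightarrow>
     H #> foldr (\<otimes>) xs \<one> = foldr (\<otimes>\<^bsub>G Mod H\<^esub>) (map (\<lambda>x. H #> x) xs) \<one>\<^bsub>G Mod H\<^esub>"
  by (induction xs) (simp_all add: FactGroup_def coset_mult_one subset flip: rcos_sum)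

lemma (in normal) rcos_foldr_perm:
  assumes "comm_group (G Mod H)" "mset xs = mset ys" "set xs \<subseteq> carrier G"
  shows "H #> foldr (\<otimes>) xs \<one> = H #> foldr (\<otimes>) ys \<one>"
proof -
  have ys: "set ys \<subseteq> carrier G" using assms(2,3) by (metis mset_eq_setD)
  have "set (map (\<lambda>x. H #> x) xs) \<subseteq> carrier (G Mod H)"
    using assms(3) by (auto simp: FactGroup_def intro: rcosetsI subset)
  then show ?thesis
    using comm_monoid.multlist_perm_cong[OF comm_group.axioms(1)[OF assms(1)],
        of "map (\<lambda>x. H #> x) xs"] assms(2,3) ys
    by (simp add: rcos_foldr)
qed

lemma (in group) derived_rcos_foldr_perm:
  assumes "subgroup H G" "mset xs = mset ys" "set xs \<subseteq> H"
  shows "derived G H #> foldr (\<otimes>) xs \<one> = derived G H #> foldr (\<otimes>) ys \<one>"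
  using normal.rcos_foldr_perm[OF derived_subgroup_is_normal[OF assms(1)]
      derived_quot_of_subgroup_is_comm_group[OF assms(1)] assms(2)] assms(3)
  by (simp add: r_coset_def)

lemma card_image_le_if_factors:
  assumes "finite (g ` A)" and "\<And>x y. x \<in> A \<Longrightarrow> y \<in> A \<Longrightarrow> g x = g y \<Longrightarrow> f x = f y"
  shows "card (f ` A) \<le> card (g ` A)"
proof -
  have "f (inv_into A g (g x)) = f x" if "x \<in> A" for x
    using assms(2)[OF inv_into_into[OF imageI[OF that]] that f_inv_into_f[OF imageI[OF that]]] .
  then have "f ` A = (f \<circ> inv_into A g) ` g ` A"
    unfolding image_image comp_def by (rule image_cong[OF refl, symmetric])
  then show ?thesis using card_image_le[OF assms(1)] by simp
qed

lemma mset_eq_if_restrict_count_eq: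
  assumes "set xs \<subseteq> A" "set ys \<subseteq> A" "restrict (count (mset xs)) A = restrict (count (mset ys)) A"
  shows "mset xs = mset ys"
proof (rule multiset_eqI)
  fix a
  show "count (mset xs) a = count (mset ys) a"
    using fun_cong[OF assms(3), of a] assms(1,2)
    by (cases "a \<in> A") (auto, metis count_mset_0_iff subsetD)
qed

lemma restrict_count_mset_in_PiE:
  assumes "length xs \<le> r"
  shows "restrict (count (mset xs)) A \<in> PiE A (\<lambda>_. {0..r})"
proof -
  have "count (mset xs) a \<le> r" for a using count_le_size[of "mset xs" a] assms by simp
  then show ?thesis by auto
qed

text \<open>Representing H itself by \<one> lets the empty word start the Schreier rewriting.\<close>
definition coset_rep :: "('a, 'b) monoid_scheme \<Rightarrow> 'a set \<Rightarrow> 'a set \<Rightarrow> 'a" where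
  "coset_rep G H C = (if C = H then \<one>\<^bsub>G\<^esub> else SOME x. x \<in> C)"

definition schreier_gens :: "('a, 'b) monoid_scheme \<Rightarrow> 'a set \<Rightarrow> 'a set \<Rightarrow> 'a set" where
  "schreier_gens G H S =
     (\<lambda>(t, s). t \<otimes>\<^bsub>G\<^esub> s \<otimes>\<^bsub>G\<^esub> inv\<^bsub>G\<^esub> coset_rep G H (H #>\<^bsub>G\<^esub> (t \<otimes>\<^bsub>G\<^esub> s)))
       ` (coset_rep G H ` (rcosets\<^bsub>G\<^esub> H) \<times> S)"

fun cay_ball :: "('a, 'b) monoid_scheme \<Rightarrow> 'a set \<Rightarrow> nat \<Rightarrow> 'a set" where
  "cay_ball G S 0 = {\<one>\<^bsub>G\<^esub>}"
| "cay_ball G S (Suc r) = cay_ball G S r \<union> {x \<otimes>\<^bsub>G\<^esub> s | x s. x \<in> cay_ball G S r \<and> s \<in> S}"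

context group
begin

lemma cay_ball_subset: "S \<subseteq> carrier G \<Longrightarrow> cay_ball G S r \<subseteq> carrier G"
  by (induction r) auto

lemma coset_rep_in_rcos:
  assumes H: "subgroup H G" and g: "g \<in> carrier G"
  shows "coset_rep G H (H #> g) \<in> H #> g"
proof (cases "H #> g = H")
  case True
  then show ?thesis unfolding coset_rep_def using subgroup.one_closed[OF H] by simp
next
  case False
  then show ?thesis
    unfolding coset_rep_def using someI[of "\<lambda>x. x \<in> H #> g", OF rcos_self[OF g H]] by simp
qed

lemma coset_rep_closed: "subgroup H G \<Longrightarrow> g \<in> carrier G \<Longrightarrow> coset_rep G H (H #> g) \<in> carrier G"
  using coset_rep_in_rcos r_coset_subset_G subgroup.subset by blast

lemma rcos_coset_rep: "subgroup H G \<Longrightarrow> g \<in> carrier G \<Longrightarrow> H #> coset_rep G H (H #> g) = H #> g"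
  using repr_independence[OF coset_rep_in_rcos] by simp

lemma coset_rep_one: "subgroup H G \<Longrightarrow> coset_rep G H (H #> \<one>) = \<one>"
  unfolding coset_rep_def by (simp add: coset_mult_one subgroup.subset)

lemma mult_inv_coset_rep_in:
  assumes H: "subgroup H G" and g: "g \<in> carrier G"
  shows "g \<otimes> inv coset_rep G H (H #> g) \<in> H"
proof -
  obtain h where h: "h \<in> H" "coset_rep G H (H #> g) = h \<otimes> g"
    using coset_rep_in_rcos[OF H g] unfolding r_coset_def by blast
  have "h \<in> carrier G" using h(1) subgroup.subset[OF H] by blast
  then have "g \<otimes> inv coset_rep G H (H #> g) = inv h"
    using h(2) g by (simp add: inv_mult_group m_assoc[symmetric])
  then show ?thesis using h(1) subgroup.m_inv_closed[OF H] by simp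
qed

lemma schreier_gens_subset:
  "subgroup H G \<Longrightarrow> S \<subseteq> carrier G \<Longrightarrow> schreier_gens G H S \<subseteq> H"
  unfolding schreier_gens_def RCOSETS_def
  by (auto intro!: mult_inv_coset_rep_in coset_rep_closed)

lemma finite_rcosets: "finite (carrier G) \<Longrightarrow> subgroup H G \<Longrightarrow> finite (rcosets H)"
  using rcosets_subset_PowG by (meson finite_Pow_iff finite_subset)

lemma card_schreier_gens_le:
  assumes fin: "finite (carrier G)" and H: "subgroup H G" and S: "S \<subseteq> carrier G"
  shows "card (schreier_gens G H S) \<le> group_index G H * card S"
proof -
  have finS: "finite S" using finite_subset[OF S fin] .
  have "card (schreier_gens G H S) \<le> card (coset_rep G H ` (rcosets H) \<times> S)"
    unfolding schreier_gens_def by (rule card_image_le) (simp add: finite_rcosets[OF fin H] finS)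
  also have "\<dots> = card (coset_rep G H ` (rcosets H)) * card S"
    by (rule card_cartesian_product)
  also have "\<dots> \<le> group_index G H * card S"
    unfolding group_index_def by (intro mult_le_mono1 card_image_le finite_rcosets[OF fin H])
  finally show ?thesis .
qed

lemma schreier_rewriting:
  assumes H: "subgroup H G" and S: "S \<subseteq> carrier G"
  shows "g \<in> cay_ball G S r \<Longrightarrow> \<exists>xs. set xs \<subseteq> schreier_gens G H S \<and> length xs \<le> r \<and>
           foldr (\<otimes>) xs \<one> \<otimes> coset_rep G H (H #> g) = g"
proof (induction r arbitrary: g)
  case 0
  then show ?case using coset_rep_one[OF H] by (intro exI[of _ "[]"]) simp
next
  case (Suc r)
  let ?rep = "\<lambda>g. coset_rep G H (H #> g)"
  show ?case
  proof (cases "g \<in> cay_ball G S r")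
    case True
    then show ?thesis using Suc.IH le_Suc_eq by blast
  next
    case False
    then obtain x s where x: "x \<in> cay_ball G S r" and s: "s \<in> S" and g: "g = x \<otimes> s"
      using Suc.prems by auto
    have xc: "x \<in> carrier G" and sc: "s \<in> carrier G" using x s cay_ball_subset S by auto
    obtain ys where ys: "set ys \<subseteq> schreier_gens G H S" "length ys \<le> r"
      "foldr (\<otimes>) ys \<one> \<otimes> ?rep x = x"
      using Suc.IH[OF x] by blast
    define \<sigma> where "\<sigma> = ?rep x \<otimes> s \<otimes> inv ?rep (?rep x \<otimes> s)"
    have \<sigma>: "\<sigma> \<in> schreier_gens G H S"
      unfolding schreier_gens_def \<sigma>_def
      by (rule image_eqI[where x = "(?rep x, s)"])
        (use rcosetsI[OF subgroup.subset[OF H] xc] s in auto)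
    have same_coset: "H #> (?rep x \<otimes> s) = H #> g"
      using coset_mult_assoc[OF subgroup.subset[OF H]] rcos_coset_rep[OF H xc]
        coset_rep_closed[OF H xc] xc sc g
      by metis
    have ysc: "set ys \<subseteq> carrier G" and \<sigma>c: "\<sigma> \<in> carrier G"
      using ys(1) \<sigma> schreier_gens_subset[OF H S] subgroup.subset[OF H] by auto
    have gc: "g \<in> carrier G" using g xc sc by simp
    have \<sigma>_rep: "\<sigma> \<otimes> ?rep g = ?rep x \<otimes> s"
      unfolding \<sigma>_def same_coset using xc sc coset_rep_closed[OF H xc] coset_rep_closed[OF H gc]
      by (simp add: m_assoc)
    have "g = (foldr (\<otimes>) ys \<one> \<otimes> ?rep x) \<otimes> s"
      unfolding g by (rule arg_cong[where f = "\<lambda>y. y \<otimes> s", OF ys(3)[symmetric]])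
    also have "\<dots> = foldr (\<otimes>) ys \<one> \<otimes> \<sigma> \<otimes> ?rep g"
      using ysc \<sigma>c sc coset_rep_closed[OF H xc] coset_rep_closed[OF H gc]
      by (simp add: m_assoc \<sigma>_rep)
    also have "\<dots> = foldr (\<otimes>) (ys @ [\<sigma>]) \<one> \<otimes> ?rep g"
      using foldr_mult_snoc[OF ysc \<sigma>c] by simp
    finally show ?thesis using ys \<sigma> by (intro exI[of _ "ys @ [\<sigma>]"]) auto
  qed
qed

lemma derived_rcos_eq_if_same_letters:
  assumes H: "subgroup H G" and S: "S \<subseteq> carrier G"
    and xs: "set xs \<subseteq> schreier_gens G H S" "set ys \<subseteq> schreier_gens G H S" "mset xs = mset ys"
    and g: "foldr (\<otimes>) xs \<one> \<otimes> coset_rep G H (H #> g) = g" "g \<in> carrier G"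
    and h: "foldr (\<otimes>) ys \<one> \<otimes> coset_rep G H (H #> h) = h" "h \<in> carrier G"
    and same_coset: "H #> g = H #> h"
  shows "derived G H #> g = derived G H #> h"
proof -
  let ?N = "derived G H"
  have \<Sigma>: "schreier_gens G H S \<subseteq> H" "H \<subseteq> carrier G"
    using schreier_gens_subset[OF H S] subgroup.subset[OF H] by auto
  have split: "?N #> x = (?N #> foldr (\<otimes>) zs \<one>) #> coset_rep G H (H #> x)"
    if "set zs \<subseteq> schreier_gens G H S" "foldr (\<otimes>) zs \<one> \<otimes> coset_rep G H (H #> x) = x"
      "x \<in> carrier G" for x zs
  proof -
    have "set zs \<subseteq> carrier G" using that(1) \<Sigma> by blast
    then show ?thesis
      using coset_mult_assoc[OF derived_in_carrier[OF \<Sigma>(2)] multlist_closed coset_rep_closed[OF H]]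
        that(2,3)
      by simp
  qed
  have "?N #> foldr (\<otimes>) xs \<one> = ?N #> foldr (\<otimes>) ys \<one>"
    using derived_rcos_foldr_perm[OF H xs(3)] xs(1) \<Sigma>(1) by blast
  then show ?thesis using split[OF xs(1) g] split[OF xs(2) h] same_coset by simp
qed

text \<open>Each H'-coset met by the ball is determined by an H-coset together with the letter
  multiplicities, in {0..r}, of a Schreier word.\<close>
lemma card_derived_rcosets_ball_le:
  assumes fin: "finite (carrier G)" and H: "subgroup H G" and S: "S \<subseteq> carrier G"
  shows "card ((\<lambda>g. derived G H #> g) ` cay_ball G S r)
           \<le> group_index G H * (r + 1) ^ card (schreier_gens G H S)"
proof -
  let ?\<Sigma> = "schreier_gens G H S" and ?N = "derived G H" and ?rep = "\<lambda>g. coset_rep G H (H #> g)"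
  define A where "A = {(g, xs). g \<in> cay_ball G S r \<and> set xs \<subseteq> ?\<Sigma> \<and> length xs \<le> r \<and>
                               foldr (\<otimes>) xs \<one> \<otimes> ?rep g = g}"
  define key where "key = (\<lambda>(g, xs). (H #> g, restrict (count (mset xs)) ?\<Sigma>))"
  have \<Sigma>: "?\<Sigma> \<subseteq> H" "H \<subseteq> carrier G"
    using schreier_gens_subset[OF H S] subgroup.subset[OF H] by auto
  have fin_\<Sigma>: "finite ?\<Sigma>" using finite_subset[OF order_trans[OF \<Sigma>] fin] .
  have ball: "cay_ball G S r = fst ` A"
  proof
    show "cay_ball G S r \<subseteq> fst ` A"
    proof
      fix g assume "g \<in> cay_ball G S r"
      with schreier_rewriting[OF H S] obtain xs where "(g, xs) \<in> A" unfolding A_def by blast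
      then show "g \<in> fst ` A" by force
    qed
  qed (auto simp: A_def)
  have key_A: "key ` A \<subseteq> (rcosets H) \<times> (PiE ?\<Sigma> (\<lambda>_. {0..r}))"
  proof
    fix y assume "y \<in> key ` A"
    then obtain g xs where y: "y = key (g, xs)" and g: "g \<in> cay_ball G S r" and xs: "length xs \<le> r"
      unfolding A_def by auto
    have "g \<in> carrier G" using g cay_ball_subset[OF S] by blast
    then show "y \<in> (rcosets H) \<times> (PiE ?\<Sigma> (\<lambda>_. {0..r}))"
      unfolding y key_def using rcosetsI[OF \<Sigma>(2)] restrict_count_mset_in_PiE[OF xs] by simp
  qed
  have finite_target: "finite ((rcosets H) \<times> (PiE ?\<Sigma> (\<lambda>_. {0..r})))"
    using finite_rcosets[OF fin H] fin_\<Sigma> by (simp add: finite_PiE)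
  have factors: "?N #> fst p = ?N #> fst q" if "p \<in> A" "q \<in> A" "key p = key q" for p q
  proof -
    obtain g xs h ys where p: "p = (g, xs)" and q: "q = (h, ys)" by fastforce
    have words: "foldr (\<otimes>) xs \<one> \<otimes> ?rep g = g" "foldr (\<otimes>) ys \<one> \<otimes> ?rep h = h"
      and xs: "set xs \<subseteq> ?\<Sigma>" "set ys \<subseteq> ?\<Sigma>" and gh: "g \<in> carrier G" "h \<in> carrier G"
      using that(1,2) cay_ball_subset[OF S] unfolding A_def p q by auto
    have "restrict (count (mset xs)) ?\<Sigma> = restrict (count (mset ys)) ?\<Sigma>" "H #> g = H #> h"
      using that(3) unfolding key_def p q by auto
    then show ?thesis
      unfolding p q fst_conv using mset_eq_if_restrict_count_eq[OF xs]
      by (intro derived_rcos_eq_if_same_letters[OF H S xs] words gh) auto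
  qed
  have "card ((\<lambda>g. ?N #> g) ` cay_ball G S r) = card ((\<lambda>p. ?N #> fst p) ` A)"
    unfolding ball image_image ..
  also have "\<dots> \<le> card (key ` A)"
    by (rule card_image_le_if_factors[OF finite_subset[OF key_A finite_target] factors])
  also have "\<dots> \<le> card ((rcosets H) \<times> (PiE ?\<Sigma> (\<lambda>_. {0..r})))"
    by (rule card_mono[OF finite_target key_A])
  also have "\<dots> = group_index G H * (r + 1) ^ card ?\<Sigma>"
    unfolding group_index_def card_cartesian_product using fin_\<Sigma> by (simp add: card_PiE)
  finally show ?thesis .
qed

end

section \<open>Vertex expansion in Cayley graphs\<close>

lemma card_union_vboundary_ge:
  assumes hv: "cay_hver_ge G S \<epsilon>" and fin: "finite (carrier G)"
    and A: "A \<subseteq> carrier G" "A \<noteq> {}" "2 * card A \<le> card (carrier G)"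
  shows "(1 + \<epsilon>) * card A \<le> card (A \<union> cay_vboundary G S A)"
proof -
  let ?B = "cay_vboundary G S A"
  have finA: "finite A" using finite_subset[OF A(1) fin] .
  have fin_bd: "finite ?B" by (rule finite_subset[OF _ fin]) (auto simp: cay_vboundary_def)
  have "real (card A) \<le> real (card (carrier G)) / 2" using A(3) by simp
  then have "\<epsilon> \<le> card ?B / card A"
    using hv A(1,2) unfolding cay_hver_ge_def by blast
  moreover have "card A > 0" using finA A(2) by auto
  ultimately have "\<epsilon> * card A \<le> card ?B"
    by (simp add: le_divide_eq)
  moreover have "card (A \<union> ?B) = card A + card ?B"
    by (rule card_Un_disjoint[OF finA fin_bd]) (auto simp: cay_vboundary_def)
  ultimately show ?thesis by (simp add: algebra_simps)
qed

lemma cay_hver_ge_growth: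
  assumes hv: "cay_hver_ge G S \<epsilon>" and eps: "\<epsilon> \<ge> 0" and fin: "finite (carrier G)"
    and A: "\<And>r. A r \<subseteq> carrier G" "A 0 \<noteq> {}"
    and step: "\<And>r. A r \<union> cay_vboundary G S (A r) \<subseteq> A (Suc r)"
    and small: "\<And>r. r < R \<Longrightarrow> 2 * card (A r) \<le> card (carrier G)"
  shows "(1 + \<epsilon>) ^ R * card (A 0) \<le> card (A R)"
  using small
proof (induction R)
  case 0
  then show ?case by simp
next
  case (Suc R)
  have IH: "(1 + \<epsilon>) ^ R * card (A 0) \<le> card (A R)" using Suc by simp
  have "card (A 0) > 0" using card_gt_0_iff finite_subset[OF A(1) fin] A(2) by blast
  then have "0 < (1 + \<epsilon>) ^ R * card (A 0)" using eps by simp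
  then have "A R \<noteq> {}" using IH by auto
  have "(1 + \<epsilon>) ^ Suc R * card (A 0) = (1 + \<epsilon>) * ((1 + \<epsilon>) ^ R * card (A 0))"
    by simp
  also have "\<dots> \<le> (1 + \<epsilon>) * card (A R)"
    using IH eps by (intro mult_left_mono) auto
  also have "\<dots> \<le> card (A R \<union> cay_vboundary G S (A R))"
    using card_union_vboundary_ge[OF hv fin A(1) \<open>A R \<noteq> {}\<close>] Suc.prems by simp
  also have "\<dots> \<le> card (A (Suc R))"
    using card_mono[OF finite_subset[OF A(1) fin] step] by simp
  finally show ?case .
qed

context group
begin

lemma thickened_ball_vboundary_subset:
  assumes "N \<subseteq> carrier G" "S \<subseteq> carrier G"
  defines "A \<equiv> \<lambda>r. \<Union>g\<in>cay_ball G S r. N #> g"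
  shows "A r \<union> cay_vboundary G S (A r) \<subseteq> A (Suc r)"
proof -
  have mult_in: "n \<otimes> g \<otimes> s \<in> A (Suc r)" if "n \<in> N" "g \<in> cay_ball G S r" "s \<in> S" for n g s
  proof -
    have "n \<in> carrier G" "g \<in> carrier G" "s \<in> carrier G"
      using that assms(1,2) cay_ball_subset[OF assms(2)] by auto
    then have "n \<otimes> g \<otimes> s = n \<otimes> (g \<otimes> s)" by (rule m_assoc)
    moreover have "g \<otimes> s \<in> cay_ball G S (Suc r)" using that(2,3) by auto
    ultimately show ?thesis unfolding A_def r_coset_def using that(1) by blast
  qed
  have "cay_vboundary G S (A r) \<subseteq> A (Suc r)"
  proof
    fix y assume "y \<in> cay_vboundary G S (A r)"
    then obtain x s where x: "x \<in> A r" and s: "s \<in> S" and y: "y = x \<otimes> s"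
      unfolding cay_vboundary_def by blast
    from x obtain n g where "n \<in> N" "g \<in> cay_ball G S r" "x = n \<otimes> g"
      unfolding A_def r_coset_def by blast
    then show "y \<in> A (Suc r)" using mult_in s y by blast
  qed
  moreover have "A r \<subseteq> A (Suc r)" unfolding A_def by auto
  ultimately show ?thesis by blast
qed

lemma card_thickened_ball_le:
  assumes fin: "finite (carrier G)" and H: "subgroup H G" "group_index G H \<le> k"
    and S: "S \<subseteq> carrier G" "card S \<le> c"
  shows "card (\<Union>g\<in>cay_ball G S r. derived G H #> g) \<le> k * (r + 1) ^ (k * c) * card (derived G H)"
proof -
  let ?N = "derived G H"
  have N: "?N \<subseteq> carrier G" using derived_in_carrier[OF subgroup.subset[OF H(1)]] .
  have "card (schreier_gens G H S) \<le> k * c"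
    using card_schreier_gens_le[OF fin H(1) S(1)] H(2) S(2) by (meson le_trans mult_le_mono)
  then have bound: "group_index G H * (r + 1) ^ card (schreier_gens G H S) \<le> k * (r + 1) ^ (k * c)"
    using H(2) by (intro mult_le_mono power_increasing) auto
  have "card (\<Union>g\<in>cay_ball G S r. ?N #> g) \<le> sum card ((\<lambda>g. ?N #> g) ` cay_ball G S r)"
    by (rule card_Union_le_sum_card)
  also have "\<dots> = (\<Sum>C\<in>(\<lambda>g. ?N #> g) ` cay_ball G S r. card ?N)"
  proof (intro sum.cong refl)
    fix C assume "C \<in> (\<lambda>g. ?N #> g) ` cay_ball G S r"
    then obtain g where "g \<in> carrier G" "C = ?N #> g" using cay_ball_subset[OF S(1)] by blast
    then show "card C = card ?N" using card_rcosets_equal[OF rcosetsI[OF N] N] by simp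
  qed
  also have "\<dots> = card ((\<lambda>g. ?N #> g) ` cay_ball G S r) * card ?N"
    by simp
  also have "\<dots> \<le> k * (r + 1) ^ (k * c) * card ?N"
    using card_derived_rcosets_ball_le[OF fin H(1) S(1)] bound by (meson le_trans mult_le_mono1)
  finally show ?thesis .
qed

lemma thickened_ball_growth:
  assumes hv: "cay_hver_ge G S \<epsilon>" "\<epsilon> \<ge> 0" and fin: "finite (carrier G)"
    and N: "subgroup N G" and S: "S \<subseteq> carrier G"
    and small: "\<And>r. r < R \<Longrightarrow> 2 * card (\<Union>g\<in>cay_ball G S r. N #> g) \<le> card (carrier G)"
  shows "(1 + \<epsilon>) ^ R * card N \<le> card (\<Union>g\<in>cay_ball G S R. N #> g)"
proof -
  define A where "A = (\<lambda>r. \<Union>g\<in>cay_ball G S r. N #> g)"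
  have A_carrier: "A r \<subseteq> carrier G" for r
    unfolding A_def using cay_ball_subset[OF S] r_coset_subset_G[OF subgroup.subset[OF N]] by blast
  have A0: "A 0 = N" unfolding A_def using subgroup.subset[OF N] by simp
  have "A 0 \<noteq> {}" using A0 subgroup.one_closed[OF N] by auto
  have step: "A r \<union> cay_vboundary G S (A r) \<subseteq> A (Suc r)" for r
    unfolding A_def by (rule thickened_ball_vboundary_subset[OF subgroup.subset[OF N] S])
  have small_A: "2 * card (A r) \<le> card (carrier G)" if "r < R" for r
    unfolding A_def by (rule small[OF that])
  have "(1 + \<epsilon>) ^ R * card (A 0) \<le> card (A R)"
    by (rule cay_hver_ge_growth[OF hv fin A_carrier \<open>A 0 \<noteq> {}\<close> step small_A])
  then show ?thesis unfolding A0 unfolding A_def .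
qed

text \<open>If |H : H'| were large, the thickened balls H' B(r) would fill at most half of G up to
  radius R, so expansion would make them grow exponentially, beating their polynomial bound.\<close>
lemma index_derived_lt_of_expander:
  assumes fin: "finite (carrier G)" and hv: "cay_hver_ge G S \<epsilon>" and eps: "\<epsilon> > 0"
    and S: "S \<subseteq> carrier G" "card S \<le> c"
    and H: "subgroup H G" "group_index G H \<le> k"
    and R: "real k * (real R + 1) ^ (k * c) < (1 + \<epsilon>) ^ R"
  shows "group_index (G\<lparr>carrier := H\<rparr>) (derived G H) < 2 * k * (R + 1) ^ (k * c)"
proof (rule ccontr)
  let ?N = "derived G H"
  let ?X = "\<lambda>r. \<Union>g\<in>cay_ball G S r. ?N #> g"
  assume "\<not> ?thesis"
  then have big: "2 * (k * (R + 1) ^ (k * c)) \<le> group_index (G\<lparr>carrier := H\<rparr>) ?N" by simp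
  have N: "subgroup ?N G" "?N \<subseteq> H"
    using derived_is_subgroup derived_incl[OF _ H(1)] subgroup.subset[OF H(1)] by auto
  have card_N: "card ?N > 0"
    using finite_subset[OF subgroup.subset[OF N(1)] fin] subgroup.one_closed[OF N(1)] card_gt_0_iff
    by blast
  have card_H: "group_index (G\<lparr>carrier := H\<rparr>) ?N * card ?N = card H"
    using group.group_index_mult_card[OF subgroup_imp_group[OF H(1)]
        subgroup_incl[OF N(1) H(1) N(2)]]
    by simp
  note poly = card_thickened_ball_le[OF fin H S]
  have small: "2 * card (?X r) \<le> card (carrier G)" if "r < R" for r
  proof -
    have "(r + 1) ^ (k * c) \<le> (R + 1) ^ (k * c)" using that by (intro power_mono) auto
    then have "card (?X r) \<le> k * (R + 1) ^ (k * c) * card ?N"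
      using poly[of r] by (meson le_trans mult_le_mono1 mult_le_mono2)
    then have "2 * card (?X r) \<le> 2 * (k * (R + 1) ^ (k * c)) * card ?N" by simp
    also have "\<dots> \<le> card H" using big card_H by (metis mult_le_mono1)
    also have "\<dots> \<le> card (carrier G)" using card_mono[OF fin subgroup.subset[OF H(1)]] .
    finally show ?thesis .
  qed
  have "(1 + \<epsilon>) ^ R * card ?N \<le> card (?X R)"
    using thickened_ball_growth[OF hv _ fin N(1) S(1) small] eps by simp
  also have "\<dots> \<le> real (k * (R + 1) ^ (k * c) * card ?N)"
    using poly[of R] by (simp only: of_nat_le_iff)
  also have "\<dots> = real k * (real R + 1) ^ (k * c) * card ?N"
    by (simp add: add.commute)
  finally have "(1 + \<epsilon>) ^ R \<le> real k * (real R + 1) ^ (k * c)"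
    using card_N by simp
  then show False using R by simp
qed

end

lemma ex_poly_less_exp:
  assumes "\<epsilon> > 0"
  shows "\<exists>R::nat. real k * (real R + 1) ^ m < (1 + \<epsilon>) ^ R"
proof -
  have "((\<lambda>R. real k * (real R + 1) ^ m / (1 + \<epsilon>) ^ R) \<longlongrightarrow> 0) sequentially"
    using assms by real_asymp
  then obtain R where "real k * (real R + 1) ^ m / (1 + \<epsilon>) ^ R < 1"
    using order_tendstoD(2)[of _ 0 sequentially 1] eventually_sequentially by force
  then show ?thesis using assms by (auto simp: divide_less_eq)
qed

lemma expanding_sequence_imp_has_BAb:
  assumes grp: "\<And>n. group (G n)" and fin: "\<And>n. finite (carrier (G n))"
    and "expanding_sequence G"
  shows "has_BAb G"
proof -
  obtain S c \<epsilon> where eps: "\<epsilon> > 0" and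
    S: "\<And>n. symmetric_generating_set (G n) (S n) \<and> card (S n) \<le> c \<and> cay_hver_ge (G n) (S n) \<epsilon>"
    using assms(3) unfolding expanding_sequence_def by blast
  define R where "R k = (SOME R. real k * (real R + 1) ^ (k * c) < (1 + \<epsilon>) ^ R)" for k
  have R: "real k * (real (R k) + 1) ^ (k * c) < (1 + \<epsilon>) ^ R k" for k
    unfolding R_def by (rule someI_ex[OF ex_poly_less_exp[OF eps]])
  have "group_index (G n\<lparr>carrier := H\<rparr>) (derived (G n) H) < 2 * k * (R k + 1) ^ (k * c)"
    if "subgroup H (G n)" "group_index (G n) H \<le> k" for n H k
  proof -
    have "S n \<subseteq> carrier (G n)" "card (S n) \<le> c" "cay_hver_ge (G n) (S n) \<epsilon>"
      using S[of n] by (auto simp: symmetric_generating_set_def)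
    then show ?thesis using group.index_derived_lt_of_expander[OF grp fin _ eps _ _ that R] by blast
  qed
  then have "ab_k k (G n) \<le> 2 * k * (R k + 1) ^ (k * c)" for k n
    by (intro ab_k_le less_imp_le)
  then show ?thesis
    unfolding has_BAb_def by (intro exI[of _ "\<lambda>k. 2 * k * (R k + 1) ^ (k * c)"]) blast
qed

theorem mainTheorem5:
  fixes G :: "nat \<Rightarrow> ('a, 'b) monoid_scheme"
  assumes grp: "\<And>n. group (G n)"
    and fin: "\<And>n. finite (carrier (G n))"
    and solv: "\<And>n. solvable (G n)"
    and bounded_dl: "\<exists>d. \<forall>n. (derived (G n) ^^ d) (carrier (G n)) = {\<one>\<^bsub>G n\<^esub>}"
    and card_inf: "filterlim (\<lambda>n. card (carrier (G n))) at_top sequentially"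
  shows "\<not> has_BAb G \<and> \<not> expanding_sequence G"
proof -
  have "\<not> has_BAb G"
  proof
    assume "has_BAb G"
    then obtain f where f: "\<And>k n. ab_k k (G n) \<le> f k" unfolding has_BAb_def by blast
    obtain d where d: "\<And>n. (derived (G n) ^^ d) (carrier (G n)) = {\<one>\<^bsub>G n\<^esub>}"
      using bounded_dl by blast
    have bounded: "card (carrier (G n)) \<le> ((\<lambda>m. m * f m) ^^ d) 1" for n
      using group.card_le_of_derived_length[OF grp fin f d] .
    have "\<forall>\<^sub>F n in sequentially. Suc (((\<lambda>m. m * f m) ^^ d) 1) \<le> card (carrier (G n))"
      using card_inf unfolding filterlim_at_top by blast
    then obtain n where "Suc (((\<lambda>m. m * f m) ^^ d) 1) \<le> card (carrier (G n))"
      unfolding eventually_sequentially by blast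
    then show False using bounded[of n] by simp
  qed
  then show ?thesis using expanding_sequence_imp_has_BAb[of G, OF grp fin] by blast
qed

end
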